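(* Let $l_0\in\mathbb N$, let $v_1\neq v_2$ be positive integers and let $G_0\in\mathcal C_{\{v_1,v_2\},2l_0}$ be the circuit multigraph with route $(v_1,v_2,v_1,v_2,\dots,v_1,v_2)$ of length $2l_0$. Let $B',W'\subset\mathbb N$ be finite sets such that $\{v_1,v_2\}$, $B'$, $W'$ are pairwise disjoint, put $b'=\#B'$, $w'=\#W'$, $l'=b'+w'$, $V'=B'\sqcup W'$, and assume $v_1,v_2$ are larger than every element of $V'$. Then $$\#\{G\in\mathcal C_{\{v_1,v_2\}\sqcup V',\,2l_0+2l'}\mid \operatorname S(G)=G_0,\ B(G)\cap V'=B'\}=\frac{(l_0+b'+w')!^2}{(l_0+b')!\,(l_0+w')!}.$$ Moreover, the same count holds if $G_0$ is replaced by any circuit multigraph $G_0\in\mathcal C_{V_0,2l_0}$ without balanced leaves on a finite vertex set $V_0\subset\mathbb N$ disjoint from $V'$ (and then with $\{v_1,v_2\}$ replaced by $V_0$); for such $G_0$ other than the two-vertex route of length $2$, no assumption on the relative order of $V_0$ and $V'$ is needed.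
   Context: All vertices are positive integers with their natural order. For a finite $V\subset\mathbb N$ and $N\ge1$, a route through $V$ of length $N$ is a sequence $\mathbf i=(i_1,\dots,i_N)\in V^N$ whose set of entries equals $V$. Its circuit multigraph $G_{\mathbf i}$ is the directed multigraph with vertex set $V$ and edge set $\{1,\dots,N\}$ (parallel edges and loops allowed, edges have their own identity), where edge $k<N$ goes from $i_k$ to $i_{k+1}$ and edge $N$ goes from $i_N$ to $i_1$. $\mathcal C_{V,N}$ is the set of all $G_{\mathbf i}$ for routes $\mathbf i$ through $V$ of length $N$; $G_{\mathbf i}$ is identified with $\mathbf i$. The set of black vertices is $B(G_{\mathbf i})=\{i_t: t\text{ odd}\}$. Balanced leaf: if $N>2$, a vertex $v$ is a balanced leaf of $G_{\mathbf i}$ if $v$ occurs exactly once in $\mathbf i$, say $i_t=v$, and its cyclic neighbours $i_{t-1},i_{t+1}$ (indices mod $N$) are equal; for $N\le2$ there are no balanced leaves. Removing the balanced leaf $v=i_t$: if $t<N$ delete the entries at positions $t,t+1$ of $\mathbf i$, if $t=N$ delete the entries at positions $N-1,N$; this yields a route $\mathbf i'$ through $V\setminus\{v\}$ of length $N-2$, and $G_{\mathbf i'}$ is the version of $G_{\mathbf i}$ with $v$ removed. Seed graph: if $G$ has no balanced leaf, $\operatorname S(G)=G$; otherwise $\operatorname S(G)=\operatorname S(\widetilde G)$ where $\widetilde G$ is $G$ with its smallest balanced leaf removed. *)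

theory Defs
  imports Complex_Main
begin

text \<open>Routes are lists of vertices (positive naturals); positions are 0-indexed
  here, so the paper's position t corresponds to list index t-1.\<close>

definition circuits :: "nat set \<Rightarrow> nat \<Rightarrow> nat list set" where
  "circuits V N = {i. 1 \<le> N \<and> length i = N \<and> set i = V}"

text \<open>Black vertices: entries at odd (1-indexed) positions = even list indices.\<close>
definition black :: "nat list \<Rightarrow> nat set" where
  "black i = {i ! k | k. k < length i \<and> even k}"

definition balanced_leaf :: "nat list \<Rightarrow> nat \<Rightarrow> bool" where
  "balanced_leaf i v \<longleftrightarrow> 2 < length i \<and> count_list i v = 1 \<and>
     (\<exists>t < length i. i ! t = v \<and>
        i ! ((t + length i - 1) mod length i) = i ! ((t + 1) mod length i))"

definition remove_leaf :: "nat list \<Rightarrow> nat \<Rightarrow> nat list" where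
  "remove_leaf i v = (let t = (THE t. t < length i \<and> i ! t = v) in
     if Suc t < length i then take t i @ drop (t + 2) i else take (length i - 2) i)"

lemma length_remove_leaf:
  assumes "2 < length i"
  shows "length (remove_leaf i v) < length i"
  using assms by (auto simp: remove_leaf_def Let_def)

function seed :: "nat list \<Rightarrow> nat list" where
  "seed i = (if \<exists>v. balanced_leaf i v
             then seed (remove_leaf i (LEAST v. balanced_leaf i v)) else i)"
  by pat_completeness auto
termination
proof (relation "measure length")
  fix i
  assume "\<exists>v. balanced_leaf i v"
  then have "balanced_leaf i (LEAST v. balanced_leaf i v)" by (rule LeastI_ex)
  then have "2 < length i" by (simp add: balanced_leaf_def)
  then show "(remove_leaf i (LEAST v. balanced_leaf i v), i) \<in> measure length"
    by (simp add: length_remove_leaf)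
qed simp

definition alt_route :: "nat \<Rightarrow> nat \<Rightarrow> nat \<Rightarrow> nat list" where
  "alt_route v1 v2 l0 = map (\<lambda>k. if even k then v1 else v2) [0..<2 * l0]"

definition seed_count :: "nat set \<Rightarrow> nat list \<Rightarrow> nat \<Rightarrow> nat set \<Rightarrow> nat set \<Rightarrow> nat" where
  "seed_count V0 g0 l0 B' W' =
     card {g \<in> circuits (V0 \<union> (B' \<union> W')) (2 * l0 + 2 * (card B' + card W')).
             seed g = g0 \<and> black g \<inter> (B' \<union> W') = B'}"

end

theory Submission
  imports Defs "HOL-Library.FuncSet"
begin

text \<open>A route G counted here is g0 with the n = b' + w' new vertices attached as balanced
  leaves, which the seed algorithm strips off again one at a time. Recording, for every new vertex,
  the position of the entry created with it gives an injection \<phi> of B' \<union> W' into the 2m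
  positions of G, m = l0 + b' + w', and G is recovered from \<phi>: the leaf stripped first is the
  least new vertex whose successor position carries no new vertex, so decoding inserts it last.
  A new vertex is black iff its position is even, hence the routes correspond to pairs of
  injections of B' into the m even and of W' into the m odd positions. There are
  m!/(m - b')! \<cdot> m!/(m - w')! of them, and m - b' = l0 + w', m - w' = l0 + b'.\<close>

lemma count_list_eq_1_nth_unique:
  "count_list xs x = 1 \<Longrightarrow> a < length xs \<Longrightarrow> b < length xs \<Longrightarrow> xs ! a = x \<Longrightarrow> xs ! b = x \<Longrightarrow> a = b"
proof (induction xs arbitrary: a b)
  case (Cons y ys)
  show ?case
  proof (cases "y = x")
    case True
    then have "x \<notin> set ys" using Cons.prems(1) by (simp add: count_list_0_iff)
    then show ?thesis using Cons.prems True by (cases a; cases b) auto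
  next
    case False
    then show ?thesis using Cons by (cases a; cases b) auto
  qed
qed simp

lemma count_list_eq_1_in_set: "count_list xs x = 1 \<Longrightarrow> x \<in> set xs"
  by (metis count_notin zero_neq_one)

lemma card_set_length_2:
  assumes "length xs = 2" "count_list xs x = 1"
  shows "card (set xs) = 2"
proof -
  obtain a b where "xs = [a, b]"
    using assms(1) by (auto simp: numeral_2_eq_2 length_Suc_conv)
  then show ?thesis using assms(2) by (auto split: if_splits)
qed

lemma take_nth_nth_drop: "t + 1 < length xs \<Longrightarrow> xs = take t xs @ xs ! t # xs ! (t + 1) # drop (t + 2) xs"
  by (simp add: Cons_nth_drop_Suc id_take_nth_drop)

lemma cyclic_pred_eq: "(x::nat) < N \<Longrightarrow> (x + N - 1) mod N = (if x = 0 then N - 1 else x - 1)"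
  by (cases x) (auto simp: mod_if)

lemma cyclic_succ_eq: "(x::nat) < N \<Longrightarrow> (x + 1) mod N = (if x + 1 = N then 0 else x + 1)"
  by (auto simp: mod_if)

lemma balanced_leaf_iff_at:
  assumes "count_list G u = 1" "t < length G" "G ! t = u"
  shows "balanced_leaf G u \<longleftrightarrow>
    2 < length G \<and> G ! ((t + length G - 1) mod length G) = G ! ((t + 1) mod length G)"
  using assms count_list_eq_1_nth_unique[OF assms(1)] unfolding balanced_leaf_def by metis

lemma balanced_leaf_count: "balanced_leaf G u \<Longrightarrow> count_list G u = 1"
  by (simp add: balanced_leaf_def)

lemma balanced_leaf_length: "balanced_leaf G u \<Longrightarrow> 2 < length G"
  by (simp add: balanced_leaf_def)

lemma balanced_leaf_in_set: "balanced_leaf G u \<Longrightarrow> u \<in> set G"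
  by (simp add: balanced_leaf_count count_list_eq_1_in_set)

lemma black_memI: "k < length G \<Longrightarrow> even k \<Longrightarrow> G ! k \<in> black G"
  unfolding black_def by blast

lemma black_memE: "x \<in> black G \<Longrightarrow> \<exists>k<length G. even k \<and> x = G ! k"
  unfolding black_def by blast

lemma black_subset_set: "black G \<subseteq> set G"
  using black_memE nth_mem by fastforce

section \<open>Inserting and removing balanced leaves\<close>

text \<open>Inverse of remove_leaf: the new leaf v is put at position p \<le> length j + 1, next to a
  second copy of its anchor j ! anchor_index (length j) p, and the entry j ! s moves to position
  shift_index (length j) p s. For p = length j + 1 the leaf becomes the last entry and its anchor
  is the first one, as in the case t = N of remove_leaf.\<close>

definition insert_leaf :: "nat list \<Rightarrow> nat \<Rightarrow> nat \<Rightarrow> nat list" where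
  "insert_leaf j v p = (if p = 0 then v # last j # j
     else if p \<le> length j then take p j @ [v, j ! (p - 1)] @ drop p j else j @ [j ! 0, v])"

definition anchor_index :: "nat \<Rightarrow> nat \<Rightarrow> nat" where
  "anchor_index M p = (if p = 0 then M - 1 else if p \<le> M then p - 1 else 0)"

definition shift_index :: "nat \<Rightarrow> nat \<Rightarrow> nat \<Rightarrow> nat" where
  "shift_index M p s = (if M < p then (if s = 0 then M else s) else if s < p then s else s + 2)"

lemma length_insert_leaf [simp]: "length (insert_leaf j v p) = length j + 2"
  by (auto simp: insert_leaf_def)

lemma nth_insert_leaf:
  assumes "length j = M" "M \<noteq> 0" "i < M + 2"
  shows "insert_leaf j v p ! i =
    (if p = 0 then (if i = 0 then v else if i = 1 then j ! (M - 1) else j ! (i - 2))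
     else if p \<le> M then
       (if i < p then j ! i else if i = p then v else if i = p + 1 then j ! (p - 1) else j ! (i - 2))
     else (if i < M then j ! i else if i = M then j ! 0 else v))"
proof -
  consider "p = 0" | "0 < p" "p \<le> M" | "M < p" by linarith
  then show ?thesis
  proof cases
    case 1
    then show ?thesis using assms
      by (cases i) (auto simp: insert_leaf_def last_conv_nth nth_Cons split: nat.splits)
  next
    case 2
    then show ?thesis using assms
      apply (auto simp: insert_leaf_def nth_append min_def nth_Cons split: nat.splits)
      by (rule arg_cong[where f="(!) j"]) arith
  next
    case 3
    then show ?thesis using assms
      by (auto simp: insert_leaf_def nth_append nth_Cons split: nat.splits)
  qed
qed

lemma count_list_insert_leaf:
  assumes "j \<noteq> []"
  shows "count_list (insert_leaf j v p) u = count_list j u + (if u = v then 1 else 0)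
     + (if u = j ! anchor_index (length j) p then 1 else 0)"
proof -
  consider "p = 0" | "0 < p" "p \<le> length j" | "length j < p" by linarith
  then show ?thesis
  proof cases
    case 2
    have "count_list j u = count_list (take p j) u + count_list (drop p j) u"
      by (metis append_take_drop_id count_list_append)
    then show ?thesis using 2 by (auto simp: insert_leaf_def anchor_index_def)
  qed (use assms in \<open>auto simp: insert_leaf_def anchor_index_def last_conv_nth\<close>)
qed

lemma set_insert_leaf: "j \<noteq> [] \<Longrightarrow> set (insert_leaf j v p) = insert v (set j)"
  by (auto simp: insert_leaf_def last_in_set dest: in_set_takeD in_set_dropD)
     (metis append_take_drop_id Un_iff set_append)+

lemma anchor_index_less: "0 < M \<Longrightarrow> p \<le> M + 1 \<Longrightarrow> anchor_index M p < M"
  by (auto simp: anchor_index_def)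

lemma shift_index_less: "p \<le> M + 1 \<Longrightarrow> s < M \<Longrightarrow> shift_index M p s < M + 2"
  by (auto simp: shift_index_def)

lemma shift_index_inj: "s1 < M \<Longrightarrow> s2 < M \<Longrightarrow> shift_index M p s1 = shift_index M p s2 \<Longrightarrow> s1 = s2"
  by (auto simp: shift_index_def split: if_splits)

lemma shift_index_neq: "s < M \<Longrightarrow> p \<le> M + 1 \<Longrightarrow> shift_index M p s \<noteq> p"
  by (auto simp: shift_index_def)

lemma even_shift_index: "even M \<Longrightarrow> even (shift_index M p s) \<longleftrightarrow> even s"
  by (auto simp: shift_index_def)

lemma nth_insert_leaf_shift:
  "j \<noteq> [] \<Longrightarrow> p \<le> length j + 1 \<Longrightarrow> s < length j \<Longrightarrow>
    insert_leaf j v p ! shift_index (length j) p s = j ! s"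
  by (subst nth_insert_leaf[OF refl]) (auto simp: shift_index_def)

lemma nth_insert_leaf_self: "j \<noteq> [] \<Longrightarrow> p \<le> length j + 1 \<Longrightarrow> insert_leaf j v p ! p = v"
  by (subst nth_insert_leaf[OF refl]) auto

lemma insert_leaf_neighbours:
  assumes "2 \<le> length j" "p \<le> length j + 1" "s < length j" "s \<noteq> anchor_index (length j) p"
  defines "M \<equiv> length j" and "t \<equiv> shift_index (length j) p s"
  shows "insert_leaf j v p ! ((t + (M + 2) - 1) mod (M + 2)) = j ! ((s + M - 1) mod M)"
    and "insert_leaf j v p ! ((t + 1) mod (M + 2)) = j ! ((s + 1) mod M)"
proof -
  have t: "t < M + 2" using assms shift_index_less unfolding M_def t_def by auto
  have s: "s < M" using assms by (simp add: M_def)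
  have pred: "(t + (M + 2) - 1) mod (M + 2) = (if t = 0 then M + 1 else t - 1)"
    using cyclic_pred_eq[OF t] by simp
  have "insert_leaf j v p ! (if t = 0 then M + 1 else t - 1) = j ! (if s = 0 then M - 1 else s - 1)"
    using assms t by (subst nth_insert_leaf[OF refl]) (auto simp: shift_index_def anchor_index_def)
  then show "insert_leaf j v p ! ((t + (M + 2) - 1) mod (M + 2)) = j ! ((s + M - 1) mod M)"
    by (simp only: pred cyclic_pred_eq[OF s])
  have "insert_leaf j v p ! (if t + 1 = M + 2 then 0 else t + 1) = j ! (if s + 1 = M then 0 else s + 1)"
    using assms t by (subst nth_insert_leaf[OF refl]) (auto simp: shift_index_def anchor_index_def)
  then show "insert_leaf j v p ! ((t + 1) mod (M + 2)) = j ! ((s + 1) mod M)"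
    by (simp only: cyclic_succ_eq[OF t] cyclic_succ_eq[OF s])
qed

lemma balanced_leaf_insert_leaf_iff:
  assumes len: "2 < length j" and p: "p \<le> length j + 1" and "u \<noteq> v"
  shows "balanced_leaf (insert_leaf j v p) u \<longleftrightarrow>
    balanced_leaf j u \<and> u \<noteq> j ! anchor_index (length j) p"
proof -
  have j: "j \<noteq> []" using len by auto
  have cnt: "count_list (insert_leaf j v p) u =
      count_list j u + (if u = j ! anchor_index (length j) p then 1 else 0)"
    using count_list_insert_leaf[OF j] \<open>u \<noteq> v\<close> by simp
  show ?thesis
  proof (cases "count_list j u = 1 \<and> u \<noteq> j ! anchor_index (length j) p")
    case True
    then obtain s where s: "s < length j" "j ! s = u"
      using count_list_eq_1_in_set[of j u] by (auto simp: in_set_conv_nth)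
    with True have "s \<noteq> anchor_index (length j) p" by blast
    note nb = insert_leaf_neighbours[OF _ p s(1) this, of v]
    have c: "count_list (insert_leaf j v p) u = 1" using True cnt by simp
    have at: "insert_leaf j v p ! shift_index (length j) p s = u"
      using nth_insert_leaf_shift[OF j p s(1)] s(2) by simp
    have "shift_index (length j) p s < length (insert_leaf j v p)"
      using shift_index_less[OF p s(1)] by simp
    from balanced_leaf_iff_at[OF c this at] balanced_leaf_iff_at[of j u s] show ?thesis
      using True len nb s j by simp
  next
    case False
    have "j ! anchor_index (length j) p \<in> set j"
      using j p by (intro nth_mem anchor_index_less) auto
    then have "count_list j (j ! anchor_index (length j) p) \<noteq> 0"
      by (simp add: count_list_0_iff)
    with False cnt have "count_list (insert_leaf j v p) u \<noteq> 1"
      by (cases "u = j ! anchor_index (length j) p") simp_all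
    with False show ?thesis by (auto dest: balanced_leaf_count)
  qed
qed

lemma balanced_leaf_insert_leaf:
  assumes j: "j \<noteq> []" and p: "p \<le> length j + 1" and v: "v \<notin> set j"
  shows "balanced_leaf (insert_leaf j v p) v"
proof -
  define M where "M = length j"
  have "j ! anchor_index M p \<noteq> v"
    using anchor_index_less[of M p] j p v unfolding M_def by (metis length_greater_0_conv nth_mem)
  then have c: "count_list (insert_leaf j v p) v = 1"
    using v j by (simp add: count_list_insert_leaf M_def)
  have pl: "p < M + 2" using p M_def by simp
  have pred: "(p + (M + 2) - 1) mod (M + 2) = (if p = 0 then M + 1 else p - 1)"
    using cyclic_pred_eq[OF pl] by simp
  have "insert_leaf j v p ! (if p = 0 then M + 1 else p - 1) =
      insert_leaf j v p ! (if p + 1 = M + 2 then 0 else p + 1)"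
    using j p pl unfolding M_def by (auto simp: nth_insert_leaf)
  then have "insert_leaf j v p ! ((p + (M + 2) - 1) mod (M + 2)) =
      insert_leaf j v p ! ((p + 1) mod (M + 2))"
    by (simp only: pred cyclic_succ_eq[OF pl])
  then show ?thesis
    using balanced_leaf_iff_at[OF c _ nth_insert_leaf_self[OF j p]] pl j by (simp add: M_def)
qed

lemma remove_leaf_at:
  assumes "count_list G v = 1" "t < length G" "G ! t = v"
  shows "remove_leaf G v =
    (if Suc t < length G then take t G @ drop (t + 2) G else take (length G - 2) G)"
proof -
  have "(THE t. t < length G \<and> G ! t = v) = t"
    using assms count_list_eq_1_nth_unique[OF assms(1)] by blast
  then show ?thesis by (simp add: remove_leaf_def)
qed

lemma remove_leaf_insert_leaf:
  assumes j: "j \<noteq> []" and p: "p \<le> length j + 1" and v: "v \<notin> set j"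
  shows "remove_leaf (insert_leaf j v p) v = j"
proof -
  have "count_list (insert_leaf j v p) v = 1"
    using balanced_leaf_insert_leaf[OF assms] by (rule balanced_leaf_count)
  then have "remove_leaf (insert_leaf j v p) v = (if Suc p < length j + 2
      then take p (insert_leaf j v p) @ drop (p + 2) (insert_leaf j v p)
      else take (length j) (insert_leaf j v p))"
    using remove_leaf_at[of _ v p] nth_insert_leaf_self[OF j p] p by simp
  moreover consider "p = 0" | "0 < p" "p \<le> length j" | "p = length j + 1"
    using p by linarith
  ultimately show ?thesis
    by cases (use j in \<open>simp_all add: insert_leaf_def\<close>)
qed

lemma insert_leaf_remove_leaf:
  assumes leaf: "balanced_leaf G v" and t: "t < length G" "G ! t = v"
  shows "insert_leaf (remove_leaf G v) v t = G"
proof -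
  define N where "N = length G"
  have N: "2 < N" using balanced_leaf_length[OF leaf] N_def by simp
  have c: "count_list G v = 1" using leaf by (rule balanced_leaf_count)
  have "G ! ((t + N - 1) mod N) = G ! ((t + 1) mod N)"
    using balanced_leaf_iff_at[OF c t] leaf N_def by simp
  then have nb: "G ! (if t = 0 then N - 1 else t - 1) = G ! (if t + 1 = N then 0 else t + 1)"
    using cyclic_pred_eq[of t N] cyclic_succ_eq[of t N] t N_def by simp
  have rm: "remove_leaf G v = (if Suc t < N then take t G @ drop (t + 2) G else take (N - 2) G)"
    using remove_leaf_at[OF c t] N_def by simp
  consider "t = 0" | "0 < t" "t + 1 < N" | "t + 1 = N" using t N_def by linarith
  then show ?thesis
  proof cases
    case 1
    have "G \<noteq> []" using N N_def by auto
    then have "last (drop 2 G) = G ! 1" using nb N N_def 1 by (simp add: last_conv_nth[of G])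
    then show ?thesis
      using take_nth_nth_drop[of 0 G] 1 N t rm N_def by (simp add: insert_leaf_def)
  next
    case 2
    have "(take t G @ drop (t + 2) G) ! (t - 1) = G ! (t + 1)"
      using nb 2 N_def by (simp add: nth_append)
    then show ?thesis
      using take_nth_nth_drop[of t G] 2 N t rm N_def by (simp add: insert_leaf_def min_def)
  next
    case 3
    then have "G = take (t - 1) G @ [G ! (t - 1), G ! t]"
      using take_nth_nth_drop[of "t - 1" G] N N_def by simp
    moreover have "N - 2 = t - 1" using 3 by simp
    ultimately have G: "G = take (N - 2) G @ [G ! 0, v]"
      using nb 3 t N by simp
    have "insert_leaf (remove_leaf G v) v t = take (N - 2) G @ [G ! 0, v]"
      using 3 N rm N_def by (auto simp: insert_leaf_def)
    with G show ?thesis by simp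
  qed
qed

lemma remove_leaf_props:
  assumes "balanced_leaf G v"
  shows length_remove_leaf_add_2: "length (remove_leaf G v) + 2 = length G"
    and set_remove_leaf: "set G = insert v (set (remove_leaf G v))"
    and not_in_set_remove_leaf: "v \<notin> set (remove_leaf G v)"
proof -
  obtain t where t: "t < length G" "G ! t = v"
    using balanced_leaf_in_set[OF assms] by (auto simp: in_set_conv_nth)
  define j where "j = remove_leaf G v"
  have G: "insert_leaf j v t = G" using insert_leaf_remove_leaf[OF assms t] j_def by simp
  then show "length j + 2 = length G" by auto
  then have "j \<noteq> []" using balanced_leaf_length[OF assms] by auto
  then show "set G = insert v (set j)" using G set_insert_leaf by metis
  have "count_list G v = 1" using assms by (rule balanced_leaf_count)
  then show "v \<notin> set j"
    using G count_list_insert_leaf[OF \<open>j \<noteq> []\<close>, of v t v] by (simp add: count_list_0_iff)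
qed

lemma nth_insert_leaf_parity:
  assumes "length j = M" "even M" "M \<noteq> 0" "p \<le> M + 1" "i < M + 2" "i \<noteq> p"
  shows "\<exists>s<M. insert_leaf j v p ! i = j ! s \<and> (even s \<longleftrightarrow> even i)"
proof -
  have M: "2 \<le> M" using assms(2,3) by presburger
  note nth = nth_insert_leaf[OF assms(1,3,5), of v p]
  consider "p = 0" "i = 1" | "p = 0" "2 \<le> i" | "0 < p" "p \<le> M" "i < p"
    | "0 < p" "p \<le> M" "i = p + 1" | "0 < p" "p \<le> M" "p + 1 < i" | "M < p" "i < M" | "M < p" "i = M"
    using assms(4,5,6) by linarith
  then show ?thesis
  proof cases
    case 1
    then show ?thesis using nth assms M by (intro exI[of _ "M - 1"]) simp
  next
    case 2
    then show ?thesis using nth assms by (intro exI[of _ "i - 2"]) simp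
  next
    case 3
    then show ?thesis using nth assms by (intro exI[of _ i]) simp
  next
    case 4
    then show ?thesis using nth assms by (intro exI[of _ "p - 1"]) simp
  next
    case 5
    then show ?thesis using nth assms by (intro exI[of _ "i - 2"]) simp
  next
    case 6
    then show ?thesis using nth assms by (intro exI[of _ i]) simp
  next
    case 7
    then show ?thesis using nth assms by (intro exI[of _ 0]) simp
  qed
qed

lemma black_insert_leaf:
  assumes j: "j \<noteq> []" and even: "even (length j)" and p: "p \<le> length j + 1"
  shows "black (insert_leaf j v p) = black j \<union> (if even p then {v} else {})"
proof
  show "black (insert_leaf j v p) \<subseteq> black j \<union> (if even p then {v} else {})"
  proof
    fix x assume "x \<in> black (insert_leaf j v p)"
    then obtain k where k: "k < length j + 2" "even k" "x = insert_leaf j v p ! k"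
      using black_memE by fastforce
    show "x \<in> black j \<union> (if even p then {v} else {})"
    proof (cases "k = p")
      case True
      then show ?thesis using k nth_insert_leaf_self[OF j p] by simp
    next
      case False
      then obtain s where "s < length j" "x = j ! s" "even s"
        using nth_insert_leaf_parity[OF refl even _ p k(1) False] k j by auto
      then show ?thesis using black_memI by blast
    qed
  qed
  show "black j \<union> (if even p then {v} else {}) \<subseteq> black (insert_leaf j v p)"
  proof -
    have "j ! s \<in> black (insert_leaf j v p)" if "s < length j" "even s" for s
      using black_memI[of "shift_index (length j) p s" "insert_leaf j v p"] that
        nth_insert_leaf_shift[OF j p that(1)] shift_index_less[OF p that(1)]
        even_shift_index[OF even] by simp
    moreover have "even p \<Longrightarrow> v \<in> black (insert_leaf j v p)"
      using black_memI[of p "insert_leaf j v p"] nth_insert_leaf_self[OF j p] p by simp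
    ultimately show ?thesis by (auto dest: black_memE)
  qed
qed

declare seed.simps [simp del]

lemma seed_no_leaf: "\<nexists>v. balanced_leaf G v \<Longrightarrow> seed G = G"
  by (subst seed.simps) auto

lemma seed_least_leaf:
  "balanced_leaf G v \<Longrightarrow> (\<And>u. balanced_leaf G u \<Longrightarrow> v \<le> u) \<Longrightarrow> seed G = seed (remove_leaf G v)"
  by (subst seed.simps) (metis Least_equality)

lemma seed_length_set: "length (seed G) \<le> length G \<and> set (seed G) \<subseteq> set G \<and>
   ((\<exists>v. balanced_leaf G v) \<longrightarrow> length (seed G) < length G)"
proof (induction G rule: seed.induct)
  case (1 G)
  show ?case
  proof (cases "\<exists>v. balanced_leaf G v")
    case True
    define v where "v = (LEAST v. balanced_leaf G v)"
    have v: "balanced_leaf G v" using True unfolding v_def by (rule LeastI_ex)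
    have "seed G = seed (remove_leaf G v)" using True by (subst seed.simps) (simp add: v_def)
    then show ?thesis
      using "1.IH"[OF True] remove_leaf_props[OF v] v_def by auto
  qed (simp add: seed_no_leaf)
qed

lemma seed_no_leaf_iff: "length (seed G) = length G \<longleftrightarrow> (\<nexists>v. balanced_leaf G v)"
  using seed_length_set[of G] seed_no_leaf[of G] by auto

section \<open>Positions of the new vertices\<close>

text \<open>An injective \<phi> places the vertices of D at distinct positions of a cyclic route of length N;
  pos_leaf N D \<phi> u says that the position after that of u is not taken by D. These u are exactly
  the vertices of D that are balanced leaves of the route decoded from \<phi> below.\<close>

definition pos_leaf :: "nat \<Rightarrow> nat set \<Rightarrow> (nat \<Rightarrow> nat) \<Rightarrow> nat \<Rightarrow> bool" where
  "pos_leaf N D \<phi> u \<longleftrightarrow> u \<in> D \<and> (\<phi> u + 1) mod N \<notin> \<phi> ` D"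

definition pos_insert :: "nat \<Rightarrow> (nat \<Rightarrow> nat) \<Rightarrow> nat \<Rightarrow> nat \<Rightarrow> nat \<Rightarrow> nat" where
  "pos_insert M \<phi> v p = (\<lambda>u. if u = v then p else shift_index M p (\<phi> u))"

definition unshift_index :: "nat \<Rightarrow> nat \<Rightarrow> nat \<Rightarrow> nat" where
  "unshift_index N t x = (if t = N - 1 then (if x = N - 2 then 0 else x) else if x < t then x else x - 2)"

definition pos_remove :: "nat \<Rightarrow> (nat \<Rightarrow> nat) \<Rightarrow> nat \<Rightarrow> nat \<Rightarrow> nat" where
  "pos_remove N \<phi> v = (\<lambda>u. unshift_index N (\<phi> v) (\<phi> u))"

lemma shift_unshift_index:
  assumes "x < N" "t < N" "x \<noteq> t" "(t + 1) mod N \<noteq> x" "2 < N"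
  shows "shift_index (N - 2) t (unshift_index N t x) = x \<and> unshift_index N t x < N - 2"
proof (cases "t = N - 1")
  case True
  then have "x \<noteq> 0" using assms by auto
  then show ?thesis using True assms by (auto simp: shift_index_def unshift_index_def)
next
  case False
  then have "x \<noteq> t + 1" using assms by auto
  then show ?thesis using False assms by (auto simp: shift_index_def unshift_index_def)
qed

lemma succ_shift_index:
  "x < M \<Longrightarrow> p \<le> M + 1 \<Longrightarrow> (shift_index M p x + 1) mod (M + 2) =
    (if x = anchor_index M p then p else shift_index M p ((x + 1) mod M))"
  by (auto simp: shift_index_def anchor_index_def mod_if)

lemma shift_index_neq_succ: "y < M \<Longrightarrow> p \<le> M + 1 \<Longrightarrow> shift_index M p y \<noteq> (p + 1) mod (M + 2)"
  by (auto simp: shift_index_def mod_if)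

lemma pos_leaf_cong: "(\<And>u. u \<in> D \<Longrightarrow> \<phi>1 u = \<phi>2 u) \<Longrightarrow> pos_leaf N D \<phi>1 = pos_leaf N D \<phi>2"
  unfolding pos_leaf_def by (auto simp: fun_eq_iff image_def)

lemma pos_insert_image: "v \<notin> D \<Longrightarrow> pos_insert M \<phi> v p ` insert v D = insert p (shift_index M p ` \<phi> ` D)"
  by (auto simp: pos_insert_def image_iff)

lemma inj_on_shift_index: "inj_on (shift_index M p) {..<M}"
  by (auto intro: inj_onI shift_index_inj)

lemma pos_leaf_pos_insert_iff:
  assumes S: "\<phi> ` D \<subseteq> {..<M}" and v: "v \<notin> D" and p: "p \<le> M + 1" and u: "u \<in> D"
  shows "pos_leaf (M + 2) (insert v D) (pos_insert M \<phi> v p) u \<longleftrightarrow>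
    pos_leaf M D \<phi> u \<and> \<phi> u \<noteq> anchor_index M p"
proof -
  have x: "\<phi> u < M" using S u by auto
  have "u \<noteq> v" using u v by auto
  then have succ: "(pos_insert M \<phi> v p u + 1) mod (M + 2) =
      (if \<phi> u = anchor_index M p then p else shift_index M p ((\<phi> u + 1) mod M))"
    using succ_shift_index[OF x p] by (simp add: pos_insert_def)
  have "M \<noteq> 0" using x by simp
  then have "shift_index M p ((\<phi> u + 1) mod M) \<in> shift_index M p ` \<phi> ` D \<longleftrightarrow> (\<phi> u + 1) mod M \<in> \<phi> ` D"
    using inj_on_image_mem_iff[OF inj_on_shift_index _ S] by simp
  moreover have "shift_index M p ((\<phi> u + 1) mod M) \<noteq> p"
    using x p shift_index_neq[of "(\<phi> u + 1) mod M" M p] by simp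
  ultimately show ?thesis
    using u succ unfolding pos_leaf_def pos_insert_image[OF v] by auto
qed

lemma pos_leaf_pos_insert_self:
  assumes "\<phi> ` D \<subseteq> {..<M}" "v \<notin> D" "p \<le> M + 1"
  shows "pos_leaf (M + 2) (insert v D) (pos_insert M \<phi> v p) v"
proof -
  have "(p + 1) mod (M + 2) \<noteq> p" using assms(3) by (auto simp: mod_if)
  moreover have "(p + 1) mod (M + 2) \<notin> shift_index M p ` \<phi> ` D"
    using assms(1,3) shift_index_neq_succ[of _ M p] by fastforce
  ultimately show ?thesis
    unfolding pos_leaf_def pos_insert_image[OF assms(2)] by (simp add: pos_insert_def)
qed

lemma inj_on_pos_insert:
  assumes S: "\<phi> ` D \<subseteq> {..<M}" and inj: "inj_on \<phi> D" and v: "v \<notin> D" and p: "p \<le> M + 1"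
  shows "inj_on (pos_insert M \<phi> v p) (insert v D)"
proof -
  have eq: "pos_insert M \<phi> v p u = (shift_index M p \<circ> \<phi>) u" if "u \<in> D" for u
    using that v by (auto simp: pos_insert_def)
  have "inj_on (shift_index M p \<circ> \<phi>) D"
    using comp_inj_on[OF inj inj_on_subset[OF inj_on_shift_index S]] .
  then have "inj_on (pos_insert M \<phi> v p) D"
    using inj_on_cong[of D "pos_insert M \<phi> v p" "shift_index M p \<circ> \<phi>"] eq by blast
  moreover have "p \<notin> shift_index M p ` \<phi> ` D"
  proof
    assume "p \<in> shift_index M p ` \<phi> ` D"
    then obtain y where "shift_index M p y = p" "y \<in> \<phi> ` D" by (metis imageE)
    then show False using S p shift_index_neq[of y M p] by auto
  qed
  moreover have "pos_insert M \<phi> v p ` D = shift_index M p ` \<phi> ` D"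
    using eq by (simp add: image_comp)
  moreover have "D - {v} = D" "pos_insert M \<phi> v p v = p"
    using v by (auto simp: pos_insert_def)
  ultimately show ?thesis
    by (simp only: inj_on_insert) simp
qed

lemma pos_insert_less:
  assumes "\<phi> ` D \<subseteq> {..<M}" "p \<le> M + 1"
  shows "pos_insert M \<phi> v p ` insert v D \<subseteq> {..<M + 2}"
proof (rule image_subsetI)
  fix u assume "u \<in> insert v D"
  then show "pos_insert M \<phi> v p u \<in> {..<M + 2}"
    using assms shift_index_less[of p M "\<phi> u"] by (cases "u = v") (auto simp: pos_insert_def)
qed

lemma pos_remove_props:
  assumes S: "\<phi> ` D \<subseteq> {..<N}" and inj: "inj_on \<phi> D" and leaf: "pos_leaf N D \<phi> v" and N: "2 < N"
  shows shift_pos_remove: "\<And>u. u \<in> D - {v} \<Longrightarrow>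
      pos_remove N \<phi> v u < N - 2 \<and> shift_index (N - 2) (\<phi> v) (pos_remove N \<phi> v u) = \<phi> u"
    and inj_on_pos_remove: "inj_on (pos_remove N \<phi> v) (D - {v})"
proof -
  have vD: "v \<in> D" and nl: "(\<phi> v + 1) mod N \<notin> \<phi> ` D" using leaf by (auto simp: pos_leaf_def)
  show shift: "pos_remove N \<phi> v u < N - 2 \<and> shift_index (N - 2) (\<phi> v) (pos_remove N \<phi> v u) = \<phi> u"
    if u: "u \<in> D - {v}" for u
  proof -
    have "\<phi> u \<noteq> \<phi> v" using inj u vD by (auto simp: inj_on_def)
    moreover have "(\<phi> v + 1) mod N \<noteq> \<phi> u" using nl u by auto
    ultimately show ?thesis
      using shift_unshift_index[of "\<phi> u" N "\<phi> v"] S u vD N by (auto simp: pos_remove_def)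
  qed
  show "inj_on (pos_remove N \<phi> v) (D - {v})"
    by (rule inj_onI) (metis shift inj inj_onD DiffD1)
qed

text \<open>Otherwise the taken positions would be closed under successor and fill the whole cycle.\<close>

lemma pos_leaf_exists:
  assumes S: "\<phi> ` D \<subseteq> {..<N}" and inj: "inj_on \<phi> D" and "D \<noteq> {}" "finite D" "card D < N"
  shows "\<exists>u. pos_leaf N D \<phi> u"
proof (rule ccontr)
  assume "\<not> (\<exists>u. pos_leaf N D \<phi> u)"
  then have closed: "x \<in> \<phi> ` D \<Longrightarrow> (x + 1) mod N \<in> \<phi> ` D" for x
    unfolding pos_leaf_def by auto
  obtain x0 where x0: "x0 \<in> \<phi> ` D" using \<open>D \<noteq> {}\<close> by auto
  then have "x0 < N" using S by auto
  have iter: "(x0 + k) mod N \<in> \<phi> ` D" for k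
  proof (induction k)
    case 0
    then show ?case using x0 \<open>x0 < N\<close> by simp
  next
    case (Suc k)
    then show ?case using closed[OF Suc.IH] by (simp add: mod_Suc_eq)
  qed
  have "{..<N} \<subseteq> \<phi> ` D"
  proof
    fix y assume "y \<in> {..<N}"
    then have "(x0 + (y + N - x0)) mod N = y" using \<open>x0 < N\<close> by simp
    then show "y \<in> \<phi> ` D" using iter[of "y + N - x0"] by simp
  qed
  then have "N \<le> card (\<phi> ` D)" using card_mono[OF finite_imageI[OF \<open>finite D\<close>]] by fastforce
  also have "\<dots> = card D" using card_image[OF inj] .
  finally show False using \<open>card D < N\<close> by simp
qed

lemma balanced_leaf_insert_leaf_pos_iff:
  assumes j: "length j = M" "2 \<le> M" "\<forall>u\<in>D. j ! \<phi> u = u" "\<forall>u\<in>D. balanced_leaf j u \<longleftrightarrow> pos_leaf M D \<phi> u"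
    and S: "\<phi> ` D \<subseteq> {..<M}" and v: "v \<notin> set j" "v \<notin> D" and p: "p \<le> M + 1"
    and small: "D \<noteq> {} \<Longrightarrow> 2 < M" and u: "u \<in> insert v D"
  shows "balanced_leaf (insert_leaf j v p) u \<longleftrightarrow> pos_leaf (M + 2) (insert v D) (pos_insert M \<phi> v p) u"
proof (cases "u = v")
  case True
  have "j \<noteq> []" using j by auto
  then show ?thesis
    using True balanced_leaf_insert_leaf[OF _ _ v(1)] pos_leaf_pos_insert_self[OF S v(2) p] p j(1)
    by simp
next
  case False
  then have u: "u \<in> D" using u by simp
  then have "2 < M" using small by blast
  have "pos_leaf (M + 2) (insert v D) (pos_insert M \<phi> v p) u \<longleftrightarrow>
      pos_leaf M D \<phi> u \<and> \<phi> u \<noteq> anchor_index M p"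
    by (rule pos_leaf_pos_insert_iff[OF S v(2) p u])
  moreover have "balanced_leaf (insert_leaf j v p) u \<longleftrightarrow> balanced_leaf j u \<and> u \<noteq> j ! anchor_index M p"
    using balanced_leaf_insert_leaf_iff[of j p u v] \<open>2 < M\<close> j(1) p False by simp
  moreover have "u \<noteq> j ! anchor_index M p \<longleftrightarrow> \<phi> u \<noteq> anchor_index M p" if "balanced_leaf j u"
  proof -
    have "j ! \<phi> u = u" "\<phi> u < M" using j(3) S u by auto
    moreover have "anchor_index M p < M" using anchor_index_less p \<open>2 < M\<close> by simp
    ultimately show ?thesis
      using count_list_eq_1_nth_unique[OF balanced_leaf_count[OF that]] j(1) by metis
  qed
  ultimately show ?thesis using j(4) u by blast
qed

section \<open>Decoding positions into routes\<close>

definition placement :: "nat \<Rightarrow> nat set \<Rightarrow> (nat \<Rightarrow> nat) \<Rightarrow> bool" where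
  "placement N D \<phi> \<longleftrightarrow> finite D \<and> \<phi> ` D \<subseteq> {..<N} \<and> inj_on \<phi> D"

text \<open>decode g0 n D \<phi> grows g0 by n balanced leaves, the vertex u \<in> D ending up at position \<phi> u.
  The leaf that the seed algorithm removes first must be the least position leaf, so it is
  inserted last.\<close>

primrec decode :: "nat list \<Rightarrow> nat \<Rightarrow> nat set \<Rightarrow> (nat \<Rightarrow> nat) \<Rightarrow> nat list" where
  "decode g0 0 D \<phi> = g0"
| "decode g0 (Suc n) D \<phi> = (let N = length g0 + 2 * Suc n; v = (LEAST u. pos_leaf N D \<phi> u)
     in insert_leaf (decode g0 n (D - {v}) (pos_remove N \<phi> v)) v (\<phi> v))"

declare decode.simps(2) [simp del]

lemma length_decode [simp]: "length (decode g0 n D \<phi>) = length g0 + 2 * n"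
  by (induction n arbitrary: D \<phi>) (simp_all add: decode.simps(2) Let_def)

lemma decode_SucE:
  assumes g0: "2 \<le> length g0" and M: "M = length g0 + 2 * n"
    and D: "placement (M + 2) D \<phi>" "card D = Suc n"
  obtains v \<phi>' where "pos_leaf (M + 2) D \<phi> v" "\<And>u. pos_leaf (M + 2) D \<phi> u \<Longrightarrow> v \<le> u"
    "decode g0 (Suc n) D \<phi> = insert_leaf (decode g0 n (D - {v}) \<phi>') v (\<phi> v)"
    "placement M (D - {v}) \<phi>'" "card (D - {v}) = n" "\<phi> v \<le> M + 1"
    "\<And>u. u \<in> D - {v} \<Longrightarrow> \<phi> u = shift_index M (\<phi> v) (\<phi>' u)"
proof -
  define v where "v = (LEAST u. pos_leaf (M + 2) D \<phi> u)"
  have N: "length g0 + 2 * Suc n = M + 2" "2 < M + 2" using g0 M by auto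
  have S: "\<phi> ` D \<subseteq> {..<M + 2}" and inj: "inj_on \<phi> D" and fin: "finite D"
    using D(1) by (auto simp: placement_def)
  have "D \<noteq> {}" "card D < M + 2" using D(2) M by auto
  then have "\<exists>u. pos_leaf (M + 2) D \<phi> u" using pos_leaf_exists[OF S inj _ fin] by blast
  then have leaf: "pos_leaf (M + 2) D \<phi> v" unfolding v_def by (rule LeastI_ex)
  then have "v \<in> D" by (simp add: pos_leaf_def)
  note shift = shift_pos_remove[OF S inj leaf N(2)]
  show thesis
  proof (rule that[of v "pos_remove (M + 2) \<phi> v"])
    show "pos_leaf (M + 2) D \<phi> v" by (rule leaf)
    show "\<And>u. pos_leaf (M + 2) D \<phi> u \<Longrightarrow> v \<le> u"
      unfolding v_def by (rule Least_le)
    show "decode g0 (Suc n) D \<phi> = insert_leaf (decode g0 n (D - {v}) (pos_remove (M + 2) \<phi> v)) v (\<phi> v)"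
      by (simp add: decode.simps(2) Let_def M v_def)
    show "placement M (D - {v}) (pos_remove (M + 2) \<phi> v)"
      using shift inj_on_pos_remove[OF S inj leaf N(2)] fin
      unfolding placement_def by fastforce
    show "card (D - {v}) = n" using D(2) \<open>v \<in> D\<close> fin by simp
    show "\<phi> v \<le> M + 1" using S \<open>v \<in> D\<close> by auto
    show "\<phi> u = shift_index M (\<phi> v) (pos_remove (M + 2) \<phi> v u)" if "u \<in> D - {v}" for u
      using shift[OF that] by simp
  qed
qed

context
  fixes g0 :: "nat list"
  assumes length_g0: "2 \<le> length g0"
begin

lemma set_decode:
  "placement (length g0 + 2 * n) D \<phi> \<Longrightarrow> card D = n \<Longrightarrow> set (decode g0 n D \<phi>) = set g0 \<union> D"
proof (induction n arbitrary: D \<phi>)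
  case 0
  then show ?case by (simp add: placement_def)
next
  case (Suc n)
  define M where "M = length g0 + 2 * n"
  have N: "length g0 + 2 * Suc n = M + 2" using M_def by simp
  obtain v \<phi>' where v: "pos_leaf (M + 2) D \<phi> v"
    and "\<And>u. pos_leaf (M + 2) D \<phi> u \<Longrightarrow> v \<le> u"
    and G: "decode g0 (Suc n) D \<phi> = insert_leaf (decode g0 n (D - {v}) \<phi>') v (\<phi> v)"
    and D': "placement M (D - {v}) \<phi>'" "card (D - {v}) = n"
    and "\<phi> v \<le> M + 1" and "\<And>u. u \<in> D - {v} \<Longrightarrow> \<phi> u = shift_index M (\<phi> v) (\<phi>' u)"
    by (rule decode_SucE[OF length_g0 M_def Suc.prems(1)[unfolded N] Suc.prems(2)]) (rule that)
  have "decode g0 n (D - {v}) \<phi>' \<noteq> []" using length_g0 by (auto simp flip: length_0_conv)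
  then show ?case
    using G Suc.IH[OF D'[unfolded M_def]] v by (auto simp: set_insert_leaf pos_leaf_def)
qed

lemma nth_decode:
  "placement (length g0 + 2 * n) D \<phi> \<Longrightarrow> card D = n \<Longrightarrow> u \<in> D \<Longrightarrow> decode g0 n D \<phi> ! \<phi> u = u"
proof (induction n arbitrary: D \<phi>)
  case 0
  then show ?case by (simp add: placement_def)
next
  case (Suc n)
  define M where "M = length g0 + 2 * n"
  have N: "length g0 + 2 * Suc n = M + 2" using M_def by simp
  obtain v \<phi>' where "pos_leaf (M + 2) D \<phi> v"
    and "\<And>u. pos_leaf (M + 2) D \<phi> u \<Longrightarrow> v \<le> u"
    and G: "decode g0 (Suc n) D \<phi> = insert_leaf (decode g0 n (D - {v}) \<phi>') v (\<phi> v)"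
    and D': "placement M (D - {v}) \<phi>'" "card (D - {v}) = n"
    and p: "\<phi> v \<le> M + 1"
    and shift: "\<And>u. u \<in> D - {v} \<Longrightarrow> \<phi> u = shift_index M (\<phi> v) (\<phi>' u)"
    by (rule decode_SucE[OF length_g0 M_def Suc.prems(1)[unfolded N] Suc.prems(2)]) (rule that)
  define j where "j = decode g0 n (D - {v}) \<phi>'"
  have j: "j \<noteq> []" "length j = M"
    using length_g0 by (auto simp: j_def M_def simp flip: length_0_conv)
  show ?case
  proof (cases "u = v")
    case True
    then show ?thesis using G nth_insert_leaf_self[OF j(1)] p j(2) by (simp add: j_def)
  next
    case False
    then have u: "u \<in> D - {v}" using Suc.prems(3) by simp
    then have "\<phi>' u < length j" using D'(1) j(2) by (auto simp: placement_def)
    then show ?thesis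
      using G shift[OF u] nth_insert_leaf_shift[OF j(1)] p j(2) Suc.IH[OF D'[unfolded M_def] u]
      by (simp add: j_def)
  qed
qed

lemma decode_cong:
  "placement (length g0 + 2 * n) D \<phi>1 \<Longrightarrow> card D = n \<Longrightarrow> (\<And>u. u \<in> D \<Longrightarrow> \<phi>1 u = \<phi>2 u) \<Longrightarrow>
    decode g0 n D \<phi>1 = decode g0 n D \<phi>2"
proof (induction n arbitrary: D \<phi>1 \<phi>2)
  case 0
  then show ?case by simp
next
  case (Suc n)
  define M where "M = length g0 + 2 * n"
  have N: "length g0 + 2 * Suc n = M + 2" using M_def by simp
  have eq: "pos_leaf (M + 2) D \<phi>1 = pos_leaf (M + 2) D \<phi>2"
    by (rule pos_leaf_cong[OF Suc.prems(3)])
  have "\<phi>2 ` D = \<phi>1 ` D" "inj_on \<phi>2 D \<longleftrightarrow> inj_on \<phi>1 D"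
    using Suc.prems(3) by (auto cong: image_cong inj_on_cong)
  then have D2: "placement (M + 2) D \<phi>2"
    using Suc.prems(1) by (simp add: placement_def M_def)
  obtain v \<phi>1' where v: "pos_leaf (M + 2) D \<phi>1 v" "\<And>u. pos_leaf (M + 2) D \<phi>1 u \<Longrightarrow> v \<le> u"
    and G1: "decode g0 (Suc n) D \<phi>1 = insert_leaf (decode g0 n (D - {v}) \<phi>1') v (\<phi>1 v)"
    and D1': "placement M (D - {v}) \<phi>1'" "card (D - {v}) = n"
    and "\<phi>1 v \<le> M + 1"
    and shift1: "\<And>u. u \<in> D - {v} \<Longrightarrow> \<phi>1 u = shift_index M (\<phi>1 v) (\<phi>1' u)"
    by (rule decode_SucE[OF length_g0 M_def Suc.prems(1)[unfolded N] Suc.prems(2)]) (rule that)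
  obtain w \<phi>2' where w: "pos_leaf (M + 2) D \<phi>2 w" "\<And>u. pos_leaf (M + 2) D \<phi>2 u \<Longrightarrow> w \<le> u"
    and G2: "decode g0 (Suc n) D \<phi>2 = insert_leaf (decode g0 n (D - {w}) \<phi>2') w (\<phi>2 w)"
    and D2': "placement M (D - {w}) \<phi>2'" "card (D - {w}) = n"
    and "\<phi>2 w \<le> M + 1"
    and shift2: "\<And>u. u \<in> D - {w} \<Longrightarrow> \<phi>2 u = shift_index M (\<phi>2 w) (\<phi>2' u)"
    by (rule decode_SucE[OF length_g0 M_def D2 Suc.prems(2)]) (rule that)
  have "w = v" using v(2)[of w] w(2)[of v] v(1) w(1) eq by simp
  have "v \<in> D" using v(1) by (simp add: pos_leaf_def)
  then have pv: "\<phi>1 v = \<phi>2 v" using Suc.prems(3) by simp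
  have agree: "\<phi>1' u = \<phi>2' u" if "u \<in> D - {v}" for u
  proof (rule shift_index_inj)
    show "\<phi>1' u < M" "\<phi>2' u < M"
      using D1'(1) D2'(1) that \<open>w = v\<close> by (auto simp: placement_def)
    have "\<phi>1 u = \<phi>2 u" using that Suc.prems(3) by simp
    then show "shift_index M (\<phi>1 v) (\<phi>1' u) = shift_index M (\<phi>1 v) (\<phi>2' u)"
      using shift1[OF that] shift2[of u] that pv \<open>w = v\<close> by simp
  qed
  show ?case using G1 G2 Suc.IH[OF D1'[unfolded M_def] agree] pv \<open>w = v\<close> by simp
qed

lemma remove_leaf_insert_leaf_decode:
  assumes "placement (length g0 + 2 * n) D \<phi>" "card D = n" "v \<notin> set g0 \<union> D"
    and "p \<le> length g0 + 2 * n + 1"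
  shows "remove_leaf (insert_leaf (decode g0 n D \<phi>) v p) v = decode g0 n D \<phi>"
proof (rule remove_leaf_insert_leaf)
  show "decode g0 n D \<phi> \<noteq> []" using length_g0 by (auto simp flip: length_0_conv)
  show "v \<notin> set (decode g0 n D \<phi>)" using set_decode[OF assms(1,2)] assms(3) by simp
qed (use assms(4) in simp)

lemma balanced_leaf_decode_iff:
  "placement (length g0 + 2 * n) D \<phi> \<Longrightarrow> card D = n \<Longrightarrow> D \<inter> set g0 = {} \<Longrightarrow> u \<in> D \<Longrightarrow>
    balanced_leaf (decode g0 n D \<phi>) u \<longleftrightarrow> pos_leaf (length g0 + 2 * n) D \<phi> u"
proof (induction n arbitrary: D \<phi> u)
  case 0
  then show ?case by (simp add: placement_def)
next
  case (Suc n)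
  define M where "M = length g0 + 2 * n"
  have N: "length g0 + 2 * Suc n = M + 2" using M_def by simp
  obtain v \<phi>' where v: "pos_leaf (M + 2) D \<phi> v"
    and "\<And>u. pos_leaf (M + 2) D \<phi> u \<Longrightarrow> v \<le> u"
    and G: "decode g0 (Suc n) D \<phi> = insert_leaf (decode g0 n (D - {v}) \<phi>') v (\<phi> v)"
    and D': "placement M (D - {v}) \<phi>'" "card (D - {v}) = n"
    and p: "\<phi> v \<le> M + 1"
    and shift: "\<And>u. u \<in> D - {v} \<Longrightarrow> \<phi> u = shift_index M (\<phi> v) (\<phi>' u)"
    by (rule decode_SucE[OF length_g0 M_def Suc.prems(1)[unfolded N] Suc.prems(2)]) (rule that)
  define j where "j = decode g0 n (D - {v}) \<phi>'"
  have "v \<in> D" using v by (simp add: pos_leaf_def)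
  have j: "length j = M" "set j = set g0 \<union> (D - {v})"
    using set_decode[OF D'[unfolded M_def]] by (simp_all add: j_def M_def)
  have "pos_leaf (M + 2) D \<phi> = pos_leaf (M + 2) D (pos_insert M \<phi>' v (\<phi> v))"
    using pos_leaf_cong[of D \<phi> "pos_insert M \<phi>' v (\<phi> v)"] shift by (auto simp: pos_insert_def)
  moreover have "balanced_leaf (insert_leaf j v (\<phi> v)) u \<longleftrightarrow>
      pos_leaf (M + 2) (insert v (D - {v})) (pos_insert M \<phi>' v (\<phi> v)) u"
  proof (rule balanced_leaf_insert_leaf_pos_iff[OF j(1)])
    show "2 \<le> M" using length_g0 M_def by simp
    show "\<forall>u\<in>D - {v}. j ! \<phi>' u = u"
      using nth_decode[OF D'[unfolded M_def]] by (simp add: j_def M_def)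
    show "\<forall>u\<in>D - {v}. balanced_leaf j u \<longleftrightarrow> pos_leaf M (D - {v}) \<phi>' u"
      using Suc.IH[OF D'[unfolded M_def]] Suc.prems(3) by (auto simp: j_def M_def)
    show "\<phi>' ` (D - {v}) \<subseteq> {..<M}" using D'(1) by (simp add: placement_def)
    show "v \<notin> set j" using j(2) Suc.prems(3) \<open>v \<in> D\<close> by auto
    show "D - {v} \<noteq> {} \<Longrightarrow> 2 < M" using D' length_g0 M_def by (cases n) (auto simp: placement_def)
  qed (use p Suc.prems(4) in auto)
  ultimately show ?case
    using G insert_Diff[OF \<open>v \<in> D\<close>] by (simp add: j_def M_def)
qed

lemma balanced_leaf_insert_leaf_decode_iff:
  assumes D: "placement (length g0 + 2 * n) D \<phi>" "card D = n" "D \<inter> set g0 = {}"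
    and v: "v \<notin> set g0 \<union> D" and p: "p \<le> length g0 + 2 * n + 1" and u: "u \<in> insert v D"
  shows "balanced_leaf (insert_leaf (decode g0 n D \<phi>) v p) u \<longleftrightarrow>
    pos_leaf (length g0 + 2 * n + 2) (insert v D) (pos_insert (length g0 + 2 * n) \<phi> v p) u"
proof (rule balanced_leaf_insert_leaf_pos_iff[OF length_decode])
  show "2 \<le> length g0 + 2 * n" using length_g0 by simp
  show "\<forall>u\<in>D. decode g0 n D \<phi> ! \<phi> u = u" using nth_decode[OF D(1,2)] by simp
  show "\<forall>u\<in>D. balanced_leaf (decode g0 n D \<phi>) u \<longleftrightarrow> pos_leaf (length g0 + 2 * n) D \<phi> u"
    using balanced_leaf_decode_iff[OF D] by simp
  show "\<phi> ` D \<subseteq> {..<length g0 + 2 * n}" using D(1) by (simp add: placement_def)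
  show "v \<notin> set (decode g0 n D \<phi>)" using v set_decode[OF D(1,2)] by simp
  show "D \<noteq> {} \<Longrightarrow> 2 < length g0 + 2 * n" using D(1,2) length_g0 by (cases n) (auto simp: placement_def)
qed (use v p u in auto)

lemma pos_leaf_eq_if_decode_eq:
  assumes "placement (length g0 + 2 * n) D \<phi>1" "placement (length g0 + 2 * n) D \<phi>2"
    and "card D = n" "D \<inter> set g0 = {}" "decode g0 n D \<phi>1 = decode g0 n D \<phi>2"
  shows "pos_leaf (length g0 + 2 * n) D \<phi>1 = pos_leaf (length g0 + 2 * n) D \<phi>2"
proof
  fix u show "pos_leaf (length g0 + 2 * n) D \<phi>1 u = pos_leaf (length g0 + 2 * n) D \<phi>2 u"
  proof (cases "u \<in> D")
    case True
    then show ?thesis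
      using balanced_leaf_decode_iff[OF assms(1,3,4) True] balanced_leaf_decode_iff[OF assms(2,3,4) True]
        assms(5) by simp
  qed (simp add: pos_leaf_def)
qed

lemma pos_eq_if_decode_eq:
  assumes "placement (length g0 + 2 * n) D \<phi>1" "placement (length g0 + 2 * n) D \<phi>2"
    and "card D = n" "D \<inter> set g0 = {}" "decode g0 n D \<phi>1 = decode g0 n D \<phi>2"
    and leaf: "pos_leaf (length g0 + 2 * n) D \<phi>1 v"
  shows "\<phi>1 v = \<phi>2 v"
proof -
  have "v \<in> D" using leaf by (simp add: pos_leaf_def)
  show ?thesis
  proof (rule count_list_eq_1_nth_unique)
    show "count_list (decode g0 n D \<phi>1) v = 1"
      using balanced_leaf_decode_iff[OF assms(1,3,4) \<open>v \<in> D\<close>] leaf balanced_leaf_count by blast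
    show "\<phi>1 v < length (decode g0 n D \<phi>1)" "\<phi>2 v < length (decode g0 n D \<phi>1)"
      using assms(1,2) \<open>v \<in> D\<close> by (auto simp: placement_def)
    show "decode g0 n D \<phi>1 ! \<phi>1 v = v" "decode g0 n D \<phi>1 ! \<phi>2 v = v"
      using nth_decode[OF assms(1,3) \<open>v \<in> D\<close>] nth_decode[OF assms(2,3) \<open>v \<in> D\<close>]
        assms(5) by simp_all
  qed
qed

lemma decode_inj:
  assumes "placement (length g0 + 2 * n) D \<phi>1" "placement (length g0 + 2 * n) D \<phi>2"
    and "card D = n" "D \<inter> set g0 = {}" "decode g0 n D \<phi>1 = decode g0 n D \<phi>2"
  shows "u \<in> D \<Longrightarrow> \<phi>1 u = \<phi>2 u"
  using assms
proof (induction n arbitrary: D \<phi>1 \<phi>2 u)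
  case 0
  then show ?case by (simp add: placement_def)
next
  case (Suc n)
  define M where "M = length g0 + 2 * n"
  have N: "length g0 + 2 * Suc n = M + 2" using M_def by simp
  obtain v \<phi>1' where v: "pos_leaf (M + 2) D \<phi>1 v" "\<And>u. pos_leaf (M + 2) D \<phi>1 u \<Longrightarrow> v \<le> u"
    and G1: "decode g0 (Suc n) D \<phi>1 = insert_leaf (decode g0 n (D - {v}) \<phi>1') v (\<phi>1 v)"
    and D1': "placement M (D - {v}) \<phi>1'" "card (D - {v}) = n"
    and p1: "\<phi>1 v \<le> M + 1"
    and shift1: "\<And>u. u \<in> D - {v} \<Longrightarrow> \<phi>1 u = shift_index M (\<phi>1 v) (\<phi>1' u)"
    by (rule decode_SucE[OF length_g0 M_def Suc.prems(2)[unfolded N] Suc.prems(4)]) (rule that)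
  obtain w \<phi>2' where w: "pos_leaf (M + 2) D \<phi>2 w" "\<And>u. pos_leaf (M + 2) D \<phi>2 u \<Longrightarrow> w \<le> u"
    and G2: "decode g0 (Suc n) D \<phi>2 = insert_leaf (decode g0 n (D - {w}) \<phi>2') w (\<phi>2 w)"
    and D2': "placement M (D - {w}) \<phi>2'" "card (D - {w}) = n"
    and p2: "\<phi>2 w \<le> M + 1"
    and shift2: "\<And>u. u \<in> D - {w} \<Longrightarrow> \<phi>2 u = shift_index M (\<phi>2 w) (\<phi>2' u)"
    by (rule decode_SucE[OF length_g0 M_def Suc.prems(3)[unfolded N] Suc.prems(4)]) (rule that)
  have "w = v"
    using v(2)[of w] w(2)[of v] v(1) w(1) pos_leaf_eq_if_decode_eq[OF Suc.prems(2-6)] N by simp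
  have pv: "\<phi>1 v = \<phi>2 v" using pos_eq_if_decode_eq[OF Suc.prems(2-6)] v(1) N by simp
  have v': "v \<notin> set g0 \<union> (D - {v})" using v(1) Suc.prems(5) by (auto simp: pos_leaf_def)
  have "decode g0 n (D - {v}) \<phi>1' = remove_leaf (decode g0 (Suc n) D \<phi>1) v"
    using remove_leaf_insert_leaf_decode[OF D1'[unfolded M_def] v'] G1 p1 by (simp add: M_def)
  also have "\<dots> = remove_leaf (decode g0 (Suc n) D \<phi>2) v" using Suc.prems(6) by simp
  also have "\<dots> = decode g0 n (D - {v}) \<phi>2'"
    using remove_leaf_insert_leaf_decode[OF D2'[unfolded M_def \<open>w = v\<close>] v'] G2 p2 \<open>w = v\<close>
    by (simp add: M_def)
  finally have agree: "\<phi>1' u = \<phi>2' u" if "u \<in> D - {v}" for u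
    using Suc.IH[OF that D1'(1)[unfolded M_def] D2'(1)[unfolded M_def \<open>w = v\<close>] D1'(2)] Suc.prems(5)
    by blast
  show ?case
  proof (cases "u = v")
    case False
    then have u: "u \<in> D - {v}" using Suc.prems(1) by simp
    show ?thesis using shift1[OF u] shift2[of u] u pv \<open>w = v\<close> agree[OF u] by simp
  qed (use pv in simp)
qed

lemma decode_Suc_pos_insert:
  assumes D: "placement M D \<phi>" "card D = n" "D \<inter> set g0 = {}" and M: "M = length g0 + 2 * n"
    and v: "v \<notin> set g0 \<union> D" and t: "t \<le> M + 1"
    and least: "\<And>u. u \<in> D \<Longrightarrow> balanced_leaf (insert_leaf (decode g0 n D \<phi>) v t) u \<Longrightarrow> v \<le> u"
  shows "placement (M + 2) (insert v D) (pos_insert M \<phi> v t)"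
    and "decode g0 (Suc n) (insert v D) (pos_insert M \<phi> v t) = insert_leaf (decode g0 n D \<phi>) v t"
proof -
  let ?\<phi> = "pos_insert M \<phi> v t" and ?G = "insert_leaf (decode g0 n D \<phi>) v t"
  have S: "\<phi> ` D \<subseteq> {..<M}" "inj_on \<phi> D" "finite D" using D(1) by (auto simp: placement_def)
  show placement: "placement (M + 2) (insert v D) ?\<phi>"
    using inj_on_pos_insert[OF S(1,2) _ t] pos_insert_less[OF S(1) t] S(3) v
    by (simp add: placement_def)
  have "card (insert v D) = Suc n" using D(2) S(3) v by simp
  obtain w \<psi> where w: "pos_leaf (M + 2) (insert v D) ?\<phi> w"
    "\<And>u. pos_leaf (M + 2) (insert v D) ?\<phi> u \<Longrightarrow> w \<le> u"
    and G: "decode g0 (Suc n) (insert v D) ?\<phi> = insert_leaf (decode g0 n (insert v D - {w}) \<psi>) w (?\<phi> w)"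
    and \<psi>: "placement M (insert v D - {w}) \<psi>" "card (insert v D - {w}) = n"
    and "?\<phi> w \<le> M + 1"
    and shift: "\<And>u. u \<in> insert v D - {w} \<Longrightarrow> ?\<phi> u = shift_index M (?\<phi> w) (\<psi> u)"
    by (rule decode_SucE[OF length_g0 M placement \<open>card (insert v D) = Suc n\<close>]) (rule that)
  have leaf_iff: "balanced_leaf ?G u \<longleftrightarrow> pos_leaf (M + 2) (insert v D) ?\<phi> u" if "u \<in> insert v D" for u
    using balanced_leaf_insert_leaf_decode_iff[OF D(1)[unfolded M] D(2,3) v t[unfolded M] that] M
    by simp
  have "decode g0 n D \<phi> \<noteq> []" using length_g0 by (auto simp flip: length_0_conv)
  moreover have "v \<notin> set (decode g0 n D \<phi>)" using set_decode[OF D(1)[unfolded M] D(2)] v by simp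
  ultimately have "balanced_leaf ?G v" using balanced_leaf_insert_leaf t M by simp
  then have "w \<le> v" using w(2) leaf_iff[of v] by simp
  moreover have "w \<in> insert v D" using w(1) by (simp add: pos_leaf_def)
  then have "v \<le> w" using least[of w] leaf_iff[of w] w(1) by (cases "w = v") simp_all
  ultimately have "w = v" by simp
  have "?\<phi> v = t" "insert v D - {v} = D" using v by (auto simp: pos_insert_def)
  have agree: "\<psi> u = \<phi> u" if "u \<in> D" for u
  proof (rule shift_index_inj)
    show "\<psi> u < M" "\<phi> u < M" using \<psi>(1) S(1) that v \<open>w = v\<close> by (auto simp: placement_def)
    have "u \<noteq> v" using that v by auto
    then show "shift_index M t (\<psi> u) = shift_index M t (\<phi> u)"
      using shift[of u] that \<open>w = v\<close> \<open>?\<phi> v = t\<close> by (simp add: pos_insert_def)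
  qed
  have "placement (length g0 + 2 * n) D \<psi>"
    using \<psi>(1) \<open>w = v\<close> \<open>insert v D - {v} = D\<close> M by simp
  then have "decode g0 n D \<psi> = decode g0 n D \<phi>"
    by (rule decode_cong[OF _ D(2)]) (rule agree)
  then show "decode g0 (Suc n) (insert v D) ?\<phi> = ?G"
    using G \<open>w = v\<close> \<open>?\<phi> v = t\<close> \<open>insert v D - {v} = D\<close> by simp
qed

lemma decode_surj:
  assumes "length G = length g0 + 2 * n" "set G = set g0 \<union> D" "D \<inter> set g0 = {}" "finite D"
    "card D = n" "seed G = g0"
  shows "\<exists>\<phi>. placement (length g0 + 2 * n) D \<phi> \<and> decode g0 n D \<phi> = G"
  using assms
proof (induction n arbitrary: D G)
  case 0
  then have "D = {}" "\<nexists>v. balanced_leaf G v" using seed_no_leaf_iff[of G] by auto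
  then show ?case using 0 seed_no_leaf[of G] by (simp add: placement_def)
next
  case (Suc n)
  define M where "M = length g0 + 2 * n"
  have "\<exists>v. balanced_leaf G v" using seed_no_leaf_iff[of G] Suc.prems(1,6) by auto
  define v where "v = (LEAST v. balanced_leaf G v)"
  have leaf: "balanced_leaf G v" using \<open>\<exists>v. balanced_leaf G v\<close> unfolding v_def by (rule LeastI_ex)
  have least: "v \<le> u" if "balanced_leaf G u" for u using that unfolding v_def by (rule Least_le)
  define j where "j = remove_leaf G v"
  have "seed j = g0" using seed_least_leaf[OF leaf least] Suc.prems(6) by (simp add: j_def)
  then have "v \<notin> set g0" using not_in_set_remove_leaf[OF leaf] seed_length_set[of j] by (auto simp: j_def)
  then have "v \<in> D" using balanced_leaf_in_set[OF leaf] Suc.prems(2) by simp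
  then have D: "v \<notin> set g0 \<union> (D - {v})" using \<open>v \<notin> set g0\<close> by auto
  have j: "length j = M" "set j = set g0 \<union> (D - {v})"
    using length_remove_leaf_add_2[OF leaf] set_remove_leaf[OF leaf] not_in_set_remove_leaf[OF leaf]
      Suc.prems(1,2) \<open>v \<notin> set g0\<close> by (auto simp: j_def M_def)
  have D': "(D - {v}) \<inter> set g0 = {}" "finite (D - {v})" "card (D - {v}) = n"
    using Suc.prems(3-5) \<open>v \<in> D\<close> by auto
  obtain \<phi>' where \<phi>': "placement M (D - {v}) \<phi>'" "decode g0 n (D - {v}) \<phi>' = j"
    using Suc.IH[OF j(1)[unfolded M_def] j(2) D'(1-3) \<open>seed j = g0\<close>] unfolding M_def by blast
  obtain t where t: "t < length G" "G ! t = v"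
    using balanced_leaf_in_set[OF leaf] by (auto simp: in_set_conv_nth)
  have G: "insert_leaf j v t = G" using insert_leaf_remove_leaf[OF leaf t] by (simp add: j_def)
  have "t \<le> M + 1" using t Suc.prems(1) M_def by simp
  have "v \<le> u" if "balanced_leaf (insert_leaf (decode g0 n (D - {v}) \<phi>') v t) u" for u
    using least that G \<phi>'(2) by simp
  note step = decode_Suc_pos_insert[OF \<phi>'(1) D'(3,1) M_def D \<open>t \<le> M + 1\<close> this,
      unfolded insert_Diff[OF \<open>v \<in> D\<close>]]
  moreover have "length g0 + 2 * Suc n = M + 2" using M_def by simp
  ultimately show ?case using G \<phi>'(2) by auto
qed

lemma black_decode:
  "even (length g0) \<Longrightarrow> placement (length g0 + 2 * n) D \<phi> \<Longrightarrow> card D = n \<Longrightarrow>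
    black (decode g0 n D \<phi>) = black g0 \<union> {u \<in> D. even (\<phi> u)}"
proof (induction n arbitrary: D \<phi>)
  case 0
  then show ?case by (simp add: placement_def)
next
  case (Suc n)
  define M where "M = length g0 + 2 * n"
  have N: "length g0 + 2 * Suc n = M + 2" using M_def by simp
  obtain v \<phi>' where v: "pos_leaf (M + 2) D \<phi> v"
    and "\<And>u. pos_leaf (M + 2) D \<phi> u \<Longrightarrow> v \<le> u"
    and G: "decode g0 (Suc n) D \<phi> = insert_leaf (decode g0 n (D - {v}) \<phi>') v (\<phi> v)"
    and D': "placement M (D - {v}) \<phi>'" "card (D - {v}) = n"
    and p: "\<phi> v \<le> M + 1"
    and shift: "\<And>u. u \<in> D - {v} \<Longrightarrow> \<phi> u = shift_index M (\<phi> v) (\<phi>' u)"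
    by (rule decode_SucE[OF length_g0 M_def Suc.prems(2)[unfolded N] Suc.prems(3)]) (rule that)
  define j where "j = decode g0 n (D - {v}) \<phi>'"
  have j: "j \<noteq> []" "length j = M" "even M"
    using length_g0 Suc.prems(1) by (auto simp: j_def M_def simp flip: length_0_conv)
  have "{u \<in> D - {v}. even (\<phi>' u)} = {u \<in> D - {v}. even (\<phi> u)}"
    using shift even_shift_index[OF j(3)] by auto
  then have "black j = black g0 \<union> {u \<in> D - {v}. even (\<phi> u)}"
    using Suc.IH[OF Suc.prems(1) D'[unfolded M_def]] by (simp add: j_def)
  moreover have "even (length j)" "\<phi> v \<le> length j + 1" using j p by simp_all
  then have "black (decode g0 (Suc n) D \<phi>) = black j \<union> (if even (\<phi> v) then {v} else {})"
    using G black_insert_leaf[OF j(1)] by (simp add: j_def)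
  moreover have "v \<in> D" using v by (simp add: pos_leaf_def)
  ultimately show ?case by auto
qed

lemma black_decode_inter:
  "even (length g0) \<Longrightarrow> placement (length g0 + 2 * n) D \<phi> \<Longrightarrow> card D = n \<Longrightarrow> D \<inter> set g0 = {} \<Longrightarrow>
    black (decode g0 n D \<phi>) \<inter> D = {u \<in> D. even (\<phi> u)}"
  using black_decode black_subset_set[of g0] by auto

context
  assumes no_leaf_g0: "\<nexists>v. balanced_leaf g0 v"
begin

lemma balanced_leaf_decode_seed_vertex:
  assumes "placement (length g0 + 2 * n) D \<phi>" "card D = n" "D \<inter> set g0 = {}"
    and "x \<in> set g0" "balanced_leaf (decode g0 n D \<phi>) x"
  shows "length g0 = 2 \<and> card (set g0) = 2"
  using assms
proof (induction n arbitrary: D \<phi>)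
  case 0
  then show ?case using no_leaf_g0 by simp
next
  case (Suc n)
  define M where "M = length g0 + 2 * n"
  have N: "length g0 + 2 * Suc n = M + 2" using M_def by simp
  obtain v \<phi>' where v: "pos_leaf (M + 2) D \<phi> v"
    and "\<And>u. pos_leaf (M + 2) D \<phi> u \<Longrightarrow> v \<le> u"
    and G: "decode g0 (Suc n) D \<phi> = insert_leaf (decode g0 n (D - {v}) \<phi>') v (\<phi> v)"
    and D': "placement M (D - {v}) \<phi>'" "card (D - {v}) = n"
    and p: "\<phi> v \<le> M + 1"
    and "\<And>u. u \<in> D - {v} \<Longrightarrow> \<phi> u = shift_index M (\<phi> v) (\<phi>' u)"
    by (rule decode_SucE[OF length_g0 M_def Suc.prems(1)[unfolded N] Suc.prems(2)]) (rule that)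
  define j where "j = decode g0 n (D - {v}) \<phi>'"
  have j: "j \<noteq> []" "length j = M"
    using length_g0 by (auto simp: j_def M_def simp flip: length_0_conv)
  have "x \<noteq> v" using v Suc.prems(3,4) by (auto simp: pos_leaf_def)
  show ?case
  proof (cases "2 < M")
    case False
    then have "n = 0" "length g0 = 2" using length_g0 M_def by auto
    have "count_list g0 x \<le> count_list (decode g0 (Suc n) D \<phi>) x"
      using G count_list_insert_leaf[OF j(1)] \<open>n = 0\<close> by (simp add: j_def)
    moreover have "count_list g0 x \<noteq> 0" using Suc.prems(4) by (simp add: count_list_0_iff)
    ultimately have "count_list g0 x = 1" using balanced_leaf_count[OF Suc.prems(5)] by simp
    then show ?thesis using card_set_length_2[OF \<open>length g0 = 2\<close>] \<open>length g0 = 2\<close> by simp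
  next
    case True
    then have "balanced_leaf j x"
      using balanced_leaf_insert_leaf_iff[of j "\<phi> v" x v] Suc.prems(5) G j(2) p \<open>x \<noteq> v\<close>
      by (simp add: j_def)
    then show ?thesis
      using Suc.IH[OF D'[unfolded M_def]] Suc.prems(3,4) by (auto simp: j_def)
  qed
qed

text \<open>The order hypothesis matters only for the two-vertex route of length 2: there an old vertex
  can become a balanced leaf of the grown route, and it must not be removed before the new ones.\<close>

lemma seed_decode:
  assumes "placement (length g0 + 2 * n) D \<phi>" "card D = n" "D \<inter> set g0 = {}"
    and "length g0 = 2 \<and> card (set g0) = 2 \<Longrightarrow> \<forall>x\<in>set g0. \<forall>u\<in>D. u < x"
  shows "seed (decode g0 n D \<phi>) = g0"
  using assms
proof (induction n arbitrary: D \<phi>)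
  case 0
  then show ?case using no_leaf_g0 by (simp add: seed_no_leaf)
next
  case (Suc n)
  define M where "M = length g0 + 2 * n"
  have N: "length g0 + 2 * Suc n = M + 2" using M_def by simp
  obtain v \<phi>' where v: "pos_leaf (M + 2) D \<phi> v"
    and least: "\<And>u. pos_leaf (M + 2) D \<phi> u \<Longrightarrow> v \<le> u"
    and G: "decode g0 (Suc n) D \<phi> = insert_leaf (decode g0 n (D - {v}) \<phi>') v (\<phi> v)"
    and D': "placement M (D - {v}) \<phi>'" "card (D - {v}) = n"
    and p: "\<phi> v \<le> M + 1"
    and "\<And>u. u \<in> D - {v} \<Longrightarrow> \<phi> u = shift_index M (\<phi> v) (\<phi>' u)"
    by (rule decode_SucE[OF length_g0 M_def Suc.prems(1)[unfolded N] Suc.prems(2)]) (rule that)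
  have "v \<in> D" using v by (simp add: pos_leaf_def)
  then have v': "v \<notin> set g0 \<union> (D - {v})" using Suc.prems(3) by blast
  note leaf_iff = balanced_leaf_decode_iff[OF Suc.prems(1-3), unfolded N]
  have "seed (decode g0 (Suc n) D \<phi>) = seed (remove_leaf (decode g0 (Suc n) D \<phi>) v)"
  proof (rule seed_least_leaf)
    show "balanced_leaf (decode g0 (Suc n) D \<phi>) v" using leaf_iff \<open>v \<in> D\<close> v by simp
    fix y assume y: "balanced_leaf (decode g0 (Suc n) D \<phi>) y"
    then have "y \<in> set g0 \<or> y \<in> D"
      using balanced_leaf_in_set set_decode[OF Suc.prems(1,2)] by auto
    then show "v \<le> y"
    proof
      assume "y \<in> set g0"
      then show "v \<le> y"
        using balanced_leaf_decode_seed_vertex[OF Suc.prems(1-3) _ y] Suc.prems(4) \<open>v \<in> D\<close>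
        by fastforce
    qed (use least leaf_iff y in auto)
  qed
  also have "remove_leaf (decode g0 (Suc n) D \<phi>) v = decode g0 n (D - {v}) \<phi>'"
    using G remove_leaf_insert_leaf_decode[OF D'[unfolded M_def] v'] p by (simp add: M_def)
  also have "seed (decode g0 n (D - {v}) \<phi>') = g0"
    using Suc.IH[OF D'[unfolded M_def]] Suc.prems(3,4) by auto
  finally show ?case .
qed

lemma bij_betw_decode:
  assumes "even (length g0)" and fin: "finite B" "finite W" and disj: "B \<inter> W = {}" "(B \<union> W) \<inter> set g0 = {}"
    and order: "length g0 = 2 \<and> card (set g0) = 2 \<Longrightarrow> \<forall>x\<in>set g0. \<forall>u\<in>B \<union> W. u < x"
  defines "n \<equiv> card (B \<union> W)"
  shows "bij_betw (decode g0 n (B \<union> W))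
    {\<phi> \<in> (B \<union> W) \<rightarrow>\<^sub>E {..<length g0 + 2 * n}. inj_on \<phi> (B \<union> W) \<and> (\<forall>u\<in>B \<union> W. even (\<phi> u) \<longleftrightarrow> u \<in> B)}
    {G. length G = length g0 + 2 * n \<and> set G = set g0 \<union> (B \<union> W) \<and> seed G = g0 \<and>
        black G \<inter> (B \<union> W) = B}"
    (is "bij_betw _ ?P ?T")
proof -
  define D where "D = B \<union> W"
  have D: "finite D" "card D = n" "D \<inter> set g0 = {}" using fin disj by (simp_all add: D_def n_def)
  have placement: "placement (length g0 + 2 * n) D \<phi>" if "\<phi> \<in> ?P" for \<phi>
    using that D(1) by (auto simp: placement_def PiE_iff D_def)
  have "inj_on (decode g0 n D) ?P"
  proof (rule inj_onI)
    fix \<phi>1 \<phi>2 assume "\<phi>1 \<in> ?P" "\<phi>2 \<in> ?P" "decode g0 n D \<phi>1 = decode g0 n D \<phi>2"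
    then show "\<phi>1 = \<phi>2"
      using decode_inj[OF placement placement D(2,3)] by (auto intro: PiE_ext simp: D_def)
  qed
  moreover have "decode g0 n D ` ?P \<subseteq> ?T"
  proof (rule image_subsetI)
    fix \<phi> assume \<phi>: "\<phi> \<in> ?P"
    have "\<forall>u\<in>D. even (\<phi> u) \<longleftrightarrow> u \<in> B" using \<phi> by (simp add: D_def)
    then have "black (decode g0 n D \<phi>) \<inter> D = B"
      using black_decode_inter[OF assms(1) placement[OF \<phi>] D(2,3)] by (auto simp: D_def)
    then show "decode g0 n D \<phi> \<in> ?T"
      using set_decode[OF placement[OF \<phi>] D(2)] seed_decode[OF placement[OF \<phi>] D(2,3)] order
      by (simp add: D_def)
  qed
  moreover have "?T \<subseteq> decode g0 n D ` ?P"
  proof (rule subsetI)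
    fix G assume "G \<in> ?T"
    then have G: "length G = length g0 + 2 * n" "set G = set g0 \<union> D" "seed G = g0" "black G \<inter> D = B"
      by (simp_all add: D_def)
    obtain \<phi> where \<phi>: "placement (length g0 + 2 * n) D \<phi>" "decode g0 n D \<phi> = G"
      using decode_surj[OF G(1,2) D(3,1,2) G(3)] by blast
    show "G \<in> decode g0 n D ` ?P"
    proof (rule image_eqI)
      have "decode g0 n D \<phi> = decode g0 n D (restrict \<phi> D)"
        by (rule decode_cong[OF \<phi>(1) D(2)]) simp
      then show "G = decode g0 n D (restrict \<phi> D)" using \<phi>(2) by simp
      have "\<forall>u\<in>D. even (\<phi> u) \<longleftrightarrow> u \<in> B"
        using black_decode_inter[OF assms(1) \<phi>(1) D(2,3)] \<phi>(2) G(4) by (auto simp: D_def)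
      then show "restrict \<phi> D \<in> ?P"
        using \<phi>(1) by (auto simp: placement_def D_def)
    qed
  qed
  ultimately show ?thesis unfolding bij_betw_def D_def by blast
qed

end

end

section \<open>Counting\<close>

lemma card_even_less: "card {x. x < 2 * m \<and> even x} = (m::nat)"
proof -
  have "{x. x < 2 * m \<and> even x} = (\<lambda>i. 2 * i) ` {..<m}" by (auto elim!: evenE)
  then show ?thesis by (simp add: card_image inj_on_def)
qed

lemma card_odd_less: "card {x. x < 2 * m \<and> odd x} = (m::nat)"
proof -
  have "{x. x < 2 * m \<and> odd x} = (\<lambda>i. 2 * i + 1) ` {..<m}" by (auto elim!: oddE)
  then show ?thesis by (simp add: card_image inj_on_def)
qed

lemma card_injections:
  "finite A \<Longrightarrow> finite C \<Longrightarrow> card {f \<in> A \<rightarrow>\<^sub>E C. inj_on f A} = prod ((-) (card C)) {0..<card A}"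
  using card_inj_on_subset_funcset[of A C A] by simp

lemma real_prod_diff_eq_fact_div:
  assumes "k \<le> m"
  shows "real (prod ((-) m) {0..<k}) = fact m / fact (m - k)"
proof -
  have "prod ((-) m) {0..<k} = \<Prod>{Suc (m - k)..m}"
    using assms by (intro prod.reindex_bij_witness[of _ "\<lambda>i. m - i" "\<lambda>i. m - i"]) auto
  moreover have "fact m = fact (m - k) * \<Prod>{Suc (m - k)..m}"
    using assms fact_eq_fact_times[of "m - k" m] by simp
  then have "(fact m :: real) = fact (m - k) * real (\<Prod>{Suc (m - k)..m})"
    by (metis of_nat_fact of_nat_mult)
  ultimately show ?thesis by (simp add: field_simps)
qed

lemma inj_on_parity_merge:
  assumes "inj_on f B" "inj_on h W" "B \<inter> W = {}" "\<forall>u\<in>B. even (f u)" "\<forall>u\<in>W. odd (h u)"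
  shows "inj_on (\<lambda>u. if u \<in> B then f u else h u) (B \<union> W)"
proof -
  let ?g = "\<lambda>u. if u \<in> B then f u else h u"
  have "inj_on ?g B" using assms(1) by (auto simp: inj_on_def)
  moreover have "inj_on ?g W" using assms(2,3) by (auto simp: inj_on_def)
  moreover have "?g ` (B - W) \<inter> ?g ` (W - B) = {}" using assms(4,5) by auto
  ultimately show ?thesis by (simp add: inj_on_Un)
qed

text \<open>An injection into {..<2m} sending B to even and W to odd numbers is a pair of injections
  B \<rightarrow> evens and W \<rightarrow> odds.\<close>

lemma card_parity_injections:
  assumes fin: "finite B" "finite W" and disj: "B \<inter> W = {}"
  shows "card {\<phi> \<in> (B \<union> W) \<rightarrow>\<^sub>E {..<2 * m}. inj_on \<phi> (B \<union> W) \<and> (\<forall>u\<in>B \<union> W. even (\<phi> u) \<longleftrightarrow> u \<in> B)}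
    = prod ((-) m) {0..<card B} * prod ((-) m) {0..<card W}"
    (is "card ?P = _")
proof -
  define Ev where "Ev = {x. x < 2 * m \<and> even x}"
  define Od where "Od = {x. x < 2 * m \<and> odd x}"
  let ?IB = "{f \<in> B \<rightarrow>\<^sub>E Ev. inj_on f B}" and ?IW = "{f \<in> W \<rightarrow>\<^sub>E Od. inj_on f W}"
  let ?merge = "\<lambda>(f, h) u. if u \<in> B then f u else h u"
  have "bij_betw (\<lambda>\<phi>. (restrict \<phi> B, restrict \<phi> W)) ?P (?IB \<times> ?IW)"
  proof (rule bij_betw_byWitness[where f' = ?merge])
    show "\<forall>\<phi>\<in>?P. ?merge (restrict \<phi> B, restrict \<phi> W) = \<phi>"
      by (auto simp: fun_eq_iff PiE_iff extensional_def)
    show "\<forall>fh\<in>?IB \<times> ?IW. (restrict (?merge fh) B, restrict (?merge fh) W) = fh"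
      using disj by (auto simp: fun_eq_iff PiE_iff extensional_def)
    show "(\<lambda>\<phi>. (restrict \<phi> B, restrict \<phi> W)) ` ?P \<subseteq> ?IB \<times> ?IW"
      using disj by (auto simp: Ev_def Od_def restrict_PiE_iff PiE_iff intro: inj_on_subset)
    show "?merge ` (?IB \<times> ?IW) \<subseteq> ?P"
    proof
      fix \<phi> assume "\<phi> \<in> ?merge ` (?IB \<times> ?IW)"
      then obtain f h where \<phi>: "\<phi> = (\<lambda>u. if u \<in> B then f u else h u)"
        and f: "f \<in> B \<rightarrow>\<^sub>E Ev" "inj_on f B" and h: "h \<in> W \<rightarrow>\<^sub>E Od" "inj_on h W" by auto
      have "inj_on \<phi> (B \<union> W)"
        using inj_on_parity_merge[OF f(2) h(2) disj] f(1) h(1) \<phi> by (auto simp: Ev_def Od_def PiE_iff)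
      then show "\<phi> \<in> ?P"
        using f(1) h(1) disj \<phi> by (auto simp: Ev_def Od_def PiE_iff extensional_def)
    qed
  qed
  then have "card ?P = card ?IB * card ?IW"
    by (simp add: bij_betw_same_card card_cartesian_product)
  also have "card ?IB = prod ((-) m) {0..<card B}"
    using card_injections[OF fin(1), of Ev] card_even_less[of m] by (simp add: Ev_def)
  also have "card ?IW = prod ((-) m) {0..<card W}"
    using card_injections[OF fin(2), of Od] card_odd_less[of m] by (simp add: Od_def)
  finally show ?thesis .
qed

lemma seed_count_eq:
  assumes fin: "finite B'" "finite W'" and disj: "B' \<inter> W' = {}"
    and g0: "g0 \<in> circuits V0 (2 * l0)" and no_leaf: "\<nexists>v. balanced_leaf g0 v"
    and V0: "V0 \<inter> (B' \<union> W') = {}"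
    and order: "l0 = 1 \<and> card V0 = 2 \<longrightarrow> (\<forall>v\<in>V0. \<forall>u\<in>B' \<union> W'. u < v)"
  shows "real (seed_count V0 g0 l0 B' W') =
    fact (l0 + card B' + card W') ^ 2 / (fact (l0 + card B') * fact (l0 + card W'))"
proof -
  have len: "length g0 = 2 * l0" "1 \<le> l0" and set: "set g0 = V0"
    using g0 by (auto simp: circuits_def)
  define n where "n = card (B' \<union> W')"
  define m where "m = l0 + card B' + card W'"
  have n: "n = card B' + card W'" using card_Un_disjoint[OF fin disj] by (simp add: n_def)
  have "2 \<le> length g0" "even (length g0)" using len by simp_all
  moreover have "(B' \<union> W') \<inter> set g0 = {}" using V0 set by auto
  moreover have "length g0 = 2 \<and> card (set g0) = 2 \<Longrightarrow> \<forall>x\<in>set g0. \<forall>u\<in>B' \<union> W'. u < x"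
    using order len set by auto
  ultimately have bij: "bij_betw (decode g0 n (B' \<union> W'))
    {\<phi> \<in> (B' \<union> W') \<rightarrow>\<^sub>E {..<2 * m}. inj_on \<phi> (B' \<union> W') \<and> (\<forall>u\<in>B' \<union> W'. even (\<phi> u) \<longleftrightarrow> u \<in> B')}
    {G. length G = 2 * m \<and> set G = V0 \<union> (B' \<union> W') \<and> seed G = g0 \<and> black G \<inter> (B' \<union> W') = B'}"
    using bij_betw_decode[OF _ no_leaf _ fin disj] len set n by (simp add: n_def m_def algebra_simps)
  have "seed_count V0 g0 l0 B' W' =
      card {G. length G = 2 * m \<and> set G = V0 \<union> (B' \<union> W') \<and> seed G = g0 \<and> black G \<inter> (B' \<union> W') = B'}"
    unfolding seed_count_def circuits_def using len n by (intro arg_cong[where f = card]) (auto simp: m_def)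
  also have "\<dots> = card {\<phi> \<in> (B' \<union> W') \<rightarrow>\<^sub>E {..<2 * m}.
      inj_on \<phi> (B' \<union> W') \<and> (\<forall>u\<in>B' \<union> W'. even (\<phi> u) \<longleftrightarrow> u \<in> B')}"
    using bij_betw_same_card[OF bij] by simp
  also have "\<dots> = prod ((-) m) {0..<card B'} * prod ((-) m) {0..<card W'}"
    by (rule card_parity_injections[OF fin disj])
  finally have "real (seed_count V0 g0 l0 B' W') = fact m / fact (m - card B') * (fact m / fact (m - card W'))"
    using real_prod_diff_eq_fact_div[of _ m] by (simp add: m_def)
  then show ?thesis by (simp add: m_def power2_eq_square mult.commute add.commute add.left_commute)
qed

lemma alt_route_no_balanced_leaf: "\<nexists>v. balanced_leaf (alt_route v1 v2 l0) v"
proof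
  assume "\<exists>v. balanced_leaf (alt_route v1 v2 l0) v"
  then obtain v where leaf: "balanced_leaf (alt_route v1 v2 l0) v" ..
  have len: "length (alt_route v1 v2 l0) = 2 * l0" by (simp add: alt_route_def)
  then have "4 \<le> 2 * l0" using balanced_leaf_length[OF leaf] by simp
  obtain t where t: "t < 2 * l0" "alt_route v1 v2 l0 ! t = v"
    using balanced_leaf_in_set[OF leaf] len by (auto simp: in_set_conv_nth)
  obtain s where "s + 2 < 2 * l0" "alt_route v1 v2 l0 ! s = v" "alt_route v1 v2 l0 ! (s + 2) = v"
  proof (cases "even t")
    case True
    then show thesis using that[of 0] t \<open>4 \<le> 2 * l0\<close> by (simp add: alt_route_def)
  next
    case False
    then show thesis using that[of 1] t \<open>4 \<le> 2 * l0\<close> by (simp add: alt_route_def)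
  qed
  then show False
    using count_list_eq_1_nth_unique[OF balanced_leaf_count[OF leaf], of s "s + 2"] len by simp
qed

theorem proposition5p2:
  fixes B' W' :: "nat set" and l0 :: nat
  assumes "finite B'" and "finite W'" and "B' \<inter> W' = {}"
    and "0 \<notin> B' \<union> W'"
  shows
   "(\<forall>v1 v2. 0 < v1 \<and> 0 < v2 \<and> v1 \<noteq> v2 \<and>
       alt_route v1 v2 l0 \<in> circuits {v1, v2} (2 * l0) \<and>
       {v1, v2} \<inter> (B' \<union> W') = {} \<and> (\<forall>u \<in> B' \<union> W'. u < v1 \<and> u < v2) \<longrightarrow>
       real (seed_count {v1, v2} (alt_route v1 v2 l0) l0 B' W') =
         fact (l0 + card B' + card W') ^ 2 / (fact (l0 + card B') * fact (l0 + card W')))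
    \<and>
    (\<forall>V0 g0. finite V0 \<and> 0 \<notin> V0 \<and> g0 \<in> circuits V0 (2 * l0) \<and>
       (\<nexists>v. balanced_leaf g0 v) \<and> V0 \<inter> (B' \<union> W') = {} \<and>
       (l0 = 1 \<and> card V0 = 2 \<longrightarrow> (\<forall>v \<in> V0. \<forall>u \<in> B' \<union> W'. u < v)) \<longrightarrow>
       real (seed_count V0 g0 l0 B' W') =
         fact (l0 + card B' + card W') ^ 2 / (fact (l0 + card B') * fact (l0 + card W')))"
  using seed_count_eq[OF assms(1-3)] alt_route_no_balanced_leaf by auto

end
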